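(* Let $\Omega\subset\mathbb{R}^n$, $\mathcal J=\{1,\dots,n\}$, $k$ a kernel satisfying the standing assumptions in the context, $u\in H_k(\Omega)$, and let $(x_i,\ell_i)$, $e_m$, $P_m$ be produced by the $f$-greedy algorithm as in the context. With $a_i:=|\partial_{\ell_{i+1}}e_i(x_{i+1})|$ and $b_i:=P_i(x_{i+1},\ell_{i+1})$ (and $a_i/b_i:=0$ whenever $b_i=0$), for any $m\ge1$, \[ \left[\prod_{i=m+1}^{2m}\frac{a_i}{b_i}\right]^{1/m}\le m^{-1/2}\,\|e_{m+1}\|_{H_k(\Omega)}. \]
   Context: $k:\Omega\times\Omega\to\mathbb{R}$ is a symmetric positive definite kernel with RKHS $H_k(\Omega)$, $k\in C^2(\Omega\times\Omega)$, and for all $x\in\Omega$, $\ell\in\mathcal J$, $\partial^{(2)}_\ell k(\cdot,x)\in H_k(\Omega)$ (derivative in the second argument) with $\partial_\ell f(x)=\langle f,\partial^{(2)}_\ell k(\cdot,x)\rangle_{H_k(\Omega)}$ for all $f\in H_k(\Omega)$. For a selection $\{(x_i,\ell_i)\}_{i=1}^m\subset\Omega\times\mathcal J$, $V_m:=\operatorname{span}\{\partial^{(2)}_{\ell_i}k(\cdot,x_i)\}_{i=1}^m$ ($V_0=\{0\}$), $\Pi_m$ is the orthogonal projector onto $V_m$, $s_m:=\Pi_mu$, $e_m:=u-s_m$. The $f$-greedy algorithm starts at $m=0$ and for $m\ge0$ chooses $(x_{m+1},\ell_{m+1})\in\operatorname{argmax}_{x\in\Omega,\ell\in\mathcal J}|\partial_\ell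 e_m(x)|$. Power function: $P_m(x,\ell):=\|(I-\Pi_m)\partial^{(2)}_\ell k(\cdot,x)\|_{H_k(\Omega)}$. *)

theory Defs
  imports "HOL-Analysis.Analysis"
begin

definition partial_der :: "(real^'n \<Rightarrow> real) \<Rightarrow> real^'n \<Rightarrow> 'n \<Rightarrow> real" where
  "partial_der f x l = deriv (\<lambda>t. f (x + t *\<^sub>R axis l 1)) 0"

definition orth_proj :: "'h::real_inner set \<Rightarrow> 'h \<Rightarrow> 'h" where
  "orth_proj V u = (THE p. p \<in> V \<and> (\<forall>v\<in>V. inner (u - p) v = 0))"

end

theory Submission
  imports Defs
begin

text \<open>
  Enlarging a finite-dimensional space \<open>V\<close> by one direction \<open>d\<close> is a Gram-Schmidt step: the
  residual of \<open>u\<close> loses its component along \<open>d - \<Pi>\<^sub>V d\<close>, so its squared norm drops by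
  \<open>\<langle>u - \<Pi>\<^sub>V u, d\<rangle>\<^sup>2 / \<parallel>d - \<Pi>\<^sub>V d\<parallel>\<^sup>2\<close>. Along the greedy sequence this decrement is
  \<open>(a\<^sub>i / b\<^sub>i)\<^sup>2\<close>, so these squares for \<open>m < i \<le> 2m\<close> sum to at most \<open>\<parallel>e\<^sub>m\<^sub>+\<^sub>1\<parallel>\<^sup>2\<close>, and the
  geometric mean of the \<open>a\<^sub>i / b\<^sub>i\<close> is bounded by their quadratic mean.
\<close>

definition is_orth_proj :: "'h::real_inner set \<Rightarrow> 'h \<Rightarrow> 'h \<Rightarrow> bool" where
  "is_orth_proj V u p \<longleftrightarrow> p \<in> V \<and> (\<forall>v\<in>V. inner (u - p) v = 0)"

lemma is_orth_proj_span_iff: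
  "is_orth_proj (span S) u p \<longleftrightarrow> p \<in> span S \<and> (\<forall>s\<in>S. inner (u - p) s = 0)"
  unfolding is_orth_proj_def
  using orthogonal_to_span[of _ S "u - p"] span_base
  by (auto simp: orthogonal_def inner_commute)

lemma is_orth_proj_unique:
  assumes "subspace V" "is_orth_proj V u p" "is_orth_proj V u q"
  shows "p = q"
proof -
  have "p - q \<in> V"
    using assms by (simp add: is_orth_proj_def subspace_diff)
  then have "inner (u - q) (p - q) - inner (u - p) (p - q) = 0"
    using assms by (simp add: is_orth_proj_def)
  then have "inner (p - q) (p - q) = 0"
    by (simp add: inner_diff_left algebra_simps)
  then show ?thesis by simp
qed

lemma is_orth_proj_insert:
  fixes u d :: "'h::real_inner"
  assumes p: "is_orth_proj (span S) u p" and q: "is_orth_proj (span S) d q"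
  defines "w \<equiv> d - q"
  shows "is_orth_proj (span (insert d S)) u (p + (inner (u - p) d / inner w w) *\<^sub>R w)"
proof -
  define c where "c = inner (u - p) d / inner w w"
  have w_orth: "inner w s = 0" if "s \<in> S" for s
    using q that by (simp add: is_orth_proj_span_iff w_def)
  have "inner (u - p) q = 0" "inner w q = 0"
    using p q by (auto simp: is_orth_proj_def w_def)
  then have inner_d: "inner (u - p) w = inner (u - p) d" "inner w d = inner w w"
    by (simp_all add: w_def inner_diff_right)
  have "inner (u - (p + c *\<^sub>R w)) d = inner (u - p) d - c * inner w w"
    using inner_d by (simp add: inner_diff_left inner_add_left)
  also have "\<dots> = 0"
    using inner_d by (cases "w = 0") (auto simp: c_def)
  finally have "inner (u - (p + c *\<^sub>R w)) d = 0" .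
  moreover have "inner (u - (p + c *\<^sub>R w)) s = 0" if "s \<in> S" for s
    using p w_orth[OF that] that by (simp add: is_orth_proj_span_iff inner_diff_left inner_add_left)
  moreover have "p + c *\<^sub>R w \<in> span (insert d S)"
  proof -
    have "span S \<subseteq> span (insert d S)" "d \<in> span (insert d S)"
      by (simp_all add: span_mono subset_insertI span_base)
    then show ?thesis
      using p q by (auto simp: is_orth_proj_def w_def intro!: span_add span_scale span_diff)
  qed
  ultimately show ?thesis
    unfolding is_orth_proj_span_iff c_def by auto
qed

lemma is_orth_proj_finite_span_exists:
  fixes u :: "'h::real_inner"
  assumes "finite S"
  shows "\<exists>p. is_orth_proj (span S) u p"
  using assms
proof (induction S arbitrary: u)
  case empty
  show ?case by (auto simp: is_orth_proj_def)
next
  case (insert d S)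
  then show ?case
    using is_orth_proj_insert by blast
qed

lemma is_orth_proj_orth_proj:
  assumes "finite S"
  shows "is_orth_proj (span S) u (orth_proj (span S) u)"
proof -
  have "\<exists>!p. is_orth_proj (span S) u p"
    using is_orth_proj_finite_span_exists[OF assms] is_orth_proj_unique[OF subspace_span] by blast
  then show ?thesis
    unfolding orth_proj_def is_orth_proj_def[symmetric] by (rule theI')
qed

lemma orth_proj_eqI:
  assumes "finite S" "is_orth_proj (span S) u p"
  shows "orth_proj (span S) u = p"
  using assms is_orth_proj_orth_proj is_orth_proj_unique[OF subspace_span] by blast

lemma norm_residual_orth_proj_insert:
  fixes u d :: "'h::real_inner"
  assumes "finite S"
  defines "E \<equiv> u - orth_proj (span S) u" and "w \<equiv> d - orth_proj (span S) d"
  shows "(norm (u - orth_proj (span (insert d S)) u))\<^sup>2 + (\<bar>inner E d\<bar> / norm w)\<^sup>2 = (norm E)\<^sup>2"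
proof -
  define c where "c = inner E d / inner w w"
  have p: "is_orth_proj (span S) u (orth_proj (span S) u)"
    and q: "is_orth_proj (span S) d (orth_proj (span S) d)"
    using is_orth_proj_orth_proj[OF assms(1)] by auto
  have "orth_proj (span (insert d S)) u = orth_proj (span S) u + c *\<^sub>R w"
    using orth_proj_eqI[OF _ is_orth_proj_insert[OF p q]] assms(1)
    by (simp add: c_def E_def w_def)
  then have residual: "u - orth_proj (span (insert d S)) u = E - c *\<^sub>R w"
    by (simp add: E_def)
  have "inner E (orth_proj (span S) d) = 0"
    using p q by (simp add: is_orth_proj_def E_def)
  then have Ew: "inner E w = inner E d"
    by (simp add: w_def inner_diff_right)
  have "(norm (E - c *\<^sub>R w))\<^sup>2 = inner E E - 2 * c * inner E w + c * c * inner w w"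
    by (simp add: power2_norm_eq_inner inner_diff_left inner_diff_right inner_commute algebra_simps)
  also have "\<dots> = (norm E)\<^sup>2 - (inner E d)\<^sup>2 / (norm w)\<^sup>2"
    by (cases "w = 0") (auto simp: c_def Ew power2_norm_eq_inner[symmetric] power2_eq_square field_simps)
  finally show ?thesis
    by (simp add: residual power_divide)
qed

lemma geometric_mean_le_quadratic_mean:
  fixes c :: "'a \<Rightarrow> real"
  assumes "finite I" "I \<noteq> {}" "\<And>i. i \<in> I \<Longrightarrow> c i \<ge> 0"
  shows "(\<Prod>i\<in>I. c i) powr (1 / card I) \<le> sqrt ((\<Sum>i\<in>I. (c i)\<^sup>2) / card I)"
proof -
  have prod_nonneg: "(\<Prod>i\<in>I. c i) \<ge> 0"
    using assms(3) by (simp add: prod_nonneg)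
  have "((\<Prod>i\<in>I. c i) powr (1 / card I))\<^sup>2 = (\<Prod>i\<in>I. (c i)\<^sup>2) powr (1 / card I)"
    using prod_nonneg by (simp add: power2_eq_square prod.distrib powr_mult)
  also have "\<dots> \<le> (\<Sum>i\<in>I. (c i)\<^sup>2 / card I)"
    using arith_geom_mean[OF assms(1,2), of "\<lambda>i. (c i)\<^sup>2"] by simp
  also have "\<dots> = (\<Sum>i\<in>I. (c i)\<^sup>2) / card I"
    by (simp add: sum_divide_distrib)
  finally show ?thesis
    by (simp add: real_le_rsqrt)
qed

lemma geometric_mean_le_of_pythagorean_decrease:
  fixes r c :: "nat \<Rightarrow> real"
  assumes decrease: "\<And>i. (r (Suc i))\<^sup>2 + (c i)\<^sup>2 = (r i)\<^sup>2"
    and "\<And>i. r i \<ge> 0" "\<And>i. c i \<ge> 0" "m \<ge> 1"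
  shows "(\<Prod>i\<in>{n..<n + m}. c i) powr (1 / real m) \<le> real m powr (-1/2) * r n"
proof -
  have sum_sq: "(\<Sum>i\<in>{n..<n + k}. (c i)\<^sup>2) = (r n)\<^sup>2 - (r (n + k))\<^sup>2" for k
  proof (induction k)
    case (Suc k)
    then show ?case
      using decrease[of "n + k"] by simp
  qed simp
  have "(\<Prod>i\<in>{n..<n + m}. c i) powr (1 / real m) \<le> sqrt ((\<Sum>i\<in>{n..<n + m}. (c i)\<^sup>2) / m)"
    using geometric_mean_le_quadratic_mean[of "{n..<n + m}" c] assms by simp
  also have "\<dots> \<le> sqrt ((r n)\<^sup>2 / m)"
    unfolding sum_sq by (simp add: divide_right_mono)
  also have "\<dots> = real m powr (-1/2) * r n"
    using assms by (simp add: real_sqrt_divide powr_minus_divide powr_half_sqrt)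
  finally show ?thesis .
qed

theorem lemma3:
  fixes \<Omega> :: "(real^'n) set"
    and k :: "real^'n \<Rightarrow> real^'n \<Rightarrow> real"
    and ev :: "'h::{real_inner, complete_space} \<Rightarrow> real^'n \<Rightarrow> real"
    and K :: "real^'n \<Rightarrow> 'h"
    and dK :: "real^'n \<Rightarrow> 'n \<Rightarrow> 'h"
    and u :: 'h
    and x :: "nat \<Rightarrow> real^'n"
    and l :: "nat \<Rightarrow> 'n"
    and V :: "nat \<Rightarrow> 'h set"
    and e :: "nat \<Rightarrow> 'h"
    and P :: "nat \<Rightarrow> real^'n \<Rightarrow> 'n \<Rightarrow> real"
    and a b :: "nat \<Rightarrow> real"
    and m :: nat
  assumes \<Omega>_open: "open \<Omega>"
    and k_sym: "\<And>y z. y \<in> \<Omega> \<Longrightarrow> z \<in> \<Omega> \<Longrightarrow> k y z = k z y"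
    and k_pd: "\<And>X c. finite X \<Longrightarrow> X \<subseteq> \<Omega> \<Longrightarrow> (\<exists>y\<in>X. c y \<noteq> 0) \<Longrightarrow>
                 (\<Sum>y\<in>X. \<Sum>z\<in>X. c y * c z * k y z) > 0"
    and K_eval: "\<And>y z. y \<in> \<Omega> \<Longrightarrow> z \<in> \<Omega> \<Longrightarrow> ev (K y) z = k z y"
    and reproducing: "\<And>f y. y \<in> \<Omega> \<Longrightarrow> ev f y = inner f (K y)"
    and dense: "closure (span (K ` \<Omega>)) = UNIV"
    and dK_eval: "\<And>y z j. y \<in> \<Omega> \<Longrightarrow> z \<in> \<Omega> \<Longrightarrow> ev (dK y j) z = partial_der (k z) y j"
    and deriv_reproducing: "\<And>f y j. y \<in> \<Omega> \<Longrightarrow>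
          ((\<lambda>t. ev f (y + t *\<^sub>R axis j 1)) has_real_derivative inner f (dK y j)) (at 0)"
    and V_def: "\<And>i. V i = span {dK (x p) (l p) | p. 1 \<le> p \<and> p \<le> i}"
    and e_def: "\<And>i. e i = u - orth_proj (V i) u"
    and P_def: "\<And>i y j. P i y j = norm (dK y j - orth_proj (V i) (dK y j))"
    and greedy_in: "\<And>i. x (Suc i) \<in> \<Omega>"
    and greedy_max: "\<And>i y j. y \<in> \<Omega> \<Longrightarrow>
          \<bar>partial_der (ev (e i)) y j\<bar> \<le> \<bar>partial_der (ev (e i)) (x (Suc i)) (l (Suc i))\<bar>"
    and a_def: "\<And>i. a i = \<bar>partial_der (ev (e i)) (x (Suc i)) (l (Suc i))\<bar>"
    and b_def: "\<And>i. b i = P i (x (Suc i)) (l (Suc i))"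
    and m_pos: "m \<ge> 1"
  shows "(\<Prod>i = m + 1..2 * m. (if b i = 0 then 0 else a i / b i)) powr (1 / real m)
           \<le> real m powr (-1/2) * norm (e (m + 1))"
proof -
  define c where "c i = (if b i = 0 then 0 else a i / b i)" for i
  define d where "d i = dK (x i) (l i)" for i
  define S where "S i = d ` {1..i}" for i
  have "{dK (x p) (l p) | p. 1 \<le> p \<and> p \<le> i} = S i" for i
    by (auto simp: S_def d_def)
  then have V_span: "V i = span (S i)" for i
    by (simp add: V_def)
  have S_Suc: "S (Suc i) = insert (d (Suc i)) (S i)" for i
    by (simp add: S_def atLeastAtMostSuc_conv)
  have partial_der_ev: "partial_der (ev f) y j = inner f (dK y j)" if "y \<in> \<Omega>" for f y j
    unfolding partial_der_def using deriv_reproducing[OF that] by (rule DERIV_imp_deriv)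
  have "c i = \<bar>inner (e i) (d (Suc i))\<bar> / norm (d (Suc i) - orth_proj (span (S i)) (d (Suc i)))" for i
    by (simp add: c_def a_def b_def P_def d_def partial_der_ev[OF greedy_in] V_span)
  then have decrease: "(norm (e (Suc i)))\<^sup>2 + (c i)\<^sup>2 = (norm (e i))\<^sup>2" for i
    using norm_residual_orth_proj_insert[of "S i" u "d (Suc i)"]
    by (simp add: e_def V_span S_Suc S_def[of i])
  have c_nonneg: "c i \<ge> 0" for i
    by (simp add: c_def a_def b_def P_def)
  have "(\<Prod>i\<in>{m + 1..<(m + 1) + m}. c i) powr (1 / real m) \<le> real m powr (-1/2) * norm (e (m + 1))"
    by (rule geometric_mean_le_of_pythagorean_decrease[of "\<lambda>i. norm (e i)",
          OF decrease norm_ge_zero c_nonneg m_pos])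
  moreover have "{m + 1..<(m + 1) + m} = {m + 1..2 * m}"
    by auto
  ultimately show ?thesis
    by (simp only: c_def)
qed

end
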